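(* Consider a binary symmetric model $\mathrm{BOHT}(2,r,\mathrm{Unif}(\{\pm\}),B,D)$ with $\mathbb E_{t\sim D}t=d$. If $(r-1)\,d\,\sup_{0<\epsilon\le1}f_B(\epsilon)<1$, where $f_B(\epsilon)=\frac{1}{(r-1)\epsilon}C_{\chi^2}\big(\mathrm{BEC}_{1-\epsilon}^{\times(r-1)}\circ B\big)$, then reconstruction is impossible.
   Context: $B:\{\pm\}\to\{\pm\}^{r-1}$ is a kernel which, together with the coordinatewise sign flip, is a BMS channel (a channel $P:\{\pm\}\to\mathcal Y$ is BMS if there is a measurable involution $\sigma$ of $\mathcal Y$ with $P(E|+)=P(\sigma(E)|-)$), and whose marginals are uniform. $\mathrm{BOHT}(2,r,\mathrm{Unif}(\{\pm\}),B,D)$: on a Galton–Watson $r$-uniform linear hypertree rooted at $\rho$ where each vertex independently has $t\sim D$ downward hyperedges (each with $r-1$ new children), $\sigma_\rho\sim\mathrm{Unif}(\{\pm\})$ and, given $\sigma_u$, children's labels in each downward hyperedge of $u$ are drawn independently across hyperedges from $B(\cdot|\sigma_u)$. Reconstruction is impossible if $\lim_k I(\sigma_\rho;T_k,\sigma_{L_k})=0$ ($T_k$: vertices at distance $\le k$ from $\rho$; $L_k$: distance exactly $k$). $\mathrm{BEC}_e$ is the binary erasure channel with erasure probability $e$; $C_{\chi^2}$ is the $\chi^2$-information with uniform input. *)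

theory Defs
  imports "HOL-Probability.Probability"
begin

text \<open>Labels: True = +, False = -.\<close>

primrec seq_pmf :: "'a pmf list \<Rightarrow> 'a list pmf" where
  "seq_pmf [] = return_pmf []"
| "seq_pmf (p # ps) = bind_pmf p (\<lambda>x. map_pmf (\<lambda>xs. x # xs) (seq_pmf ps))"

text \<open>Observation (T_k, sigma_{L_k}) of the subtree hanging at a vertex, truncated at depth k:
  a vertex at depth k is a leaf carrying its label; a vertex at depth < k records
  its list of downward hyperedges (each a list of r-1 children), its label is hidden.\<close>
datatype obs = Leaf bool | Inner "obs list list"

primrec boht_obs :: "nat pmf \<Rightarrow> (bool \<Rightarrow> bool list pmf) \<Rightarrow> nat \<Rightarrow> bool \<Rightarrow> obs pmf" where
  "boht_obs D B 0 s = return_pmf (Leaf s)"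
| "boht_obs D B (Suc k) s =
     bind_pmf D (\<lambda>t. map_pmf Inner
       (seq_pmf (replicate t (bind_pmf (B s) (\<lambda>xs. seq_pmf (map (boht_obs D B k) xs))))))"

definition boht_joint :: "nat pmf \<Rightarrow> (bool \<Rightarrow> bool list pmf) \<Rightarrow> nat \<Rightarrow> (bool \<times> obs) pmf" where
  "boht_joint D B k = bind_pmf (pmf_of_set UNIV) (\<lambda>s. map_pmf (\<lambda>ob. (s, ob)) (boht_obs D B k s))"

definition mutual_info_pmf :: "('a \<times> 'b) pmf \<Rightarrow> real" where
  "mutual_info_pmf P = measure_pmf.expectation P
     (\<lambda>(x, y). ln (pmf P (x, y) / (pmf (map_pmf fst P) x * pmf (map_pmf snd P) y)))"

definition chi2_info_pmf :: "('a \<times> 'b) pmf \<Rightarrow> real" where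
  "chi2_info_pmf P = (\<Sum>\<^sub>\<infinity>z. (pmf P z)\<^sup>2 / (pmf (map_pmf fst P) (fst z) * pmf (map_pmf snd P) (snd z))) - 1"

definition C_chi2 :: "(bool \<Rightarrow> 'y pmf) \<Rightarrow> real" where
  "C_chi2 W = chi2_info_pmf (bind_pmf (pmf_of_set UNIV) (\<lambda>s. map_pmf (\<lambda>y. (s, y)) (W s)))"

definition BEC :: "real \<Rightarrow> 'a \<Rightarrow> 'a option pmf" where
  "BEC e x = map_pmf (\<lambda>b. if b then None else Some x) (bernoulli_pmf e)"

definition BEC_prod_comp :: "real \<Rightarrow> (bool \<Rightarrow> bool list pmf) \<Rightarrow> bool \<Rightarrow> bool option list pmf" where
  "BEC_prod_comp e B s = bind_pmf (B s) (\<lambda>xs. seq_pmf (map (BEC e) xs))"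

definition f_B :: "nat \<Rightarrow> (bool \<Rightarrow> bool list pmf) \<Rightarrow> real \<Rightarrow> real" where
  "f_B r B \<epsilon> = C_chi2 (BEC_prod_comp (1 - \<epsilon>) B) / (real (r - 1) * \<epsilon>)"

definition bms_flip :: "(bool \<Rightarrow> bool list pmf) \<Rightarrow> bool" where
  "bms_flip B \<longleftrightarrow> (\<forall>E. measure_pmf.prob (B True) E = measure_pmf.prob (B False) (map Not ` E))"

end

theory Submission
  imports Defs
begin

text \<open>
  For a binary-input channel W with uniform input the chi-square information is
  eta(W) = sum_y (W(y|+) - W(y|-))^2 / (2 (W(y|+) + W(y|-))), and it dominates the mutual
  information since ln x <= x - 1. Among BMS channels of capacity eta, the erasure channel
  BEC_{1-eta} is the least informative in every context: pairing each output y with its flip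
  sigma y turns this into an elementary inequality that is linear in the contribution of y to eta.
  The observation of the subtree of a vertex at depth k+1 is a D-mixture of t independent copies
  of H = (depth-k observation)^{x(r-1)} o B. Replacing first the depth-k channel inside H and then
  H itself by erasure channels of the same capacity, and using 1 - (1 - eta)^t <= t eta, gives
  eta_{k+1} <= d C(BEC_{1-eta_k}^{x(r-1)} o B) <= (r-1) d (sup f_B) eta_k, a geometric decay.
\<close>

lemma pmf_summable_on: "pmf p summable_on A"
  using abs_summable_equivalent abs_summable_summable pmf_abs_summable by blast

lemma infsum_pmf_eq_1: "(\<Sum>\<^sub>\<infinity>y. pmf p y) = 1"
  using infsetsum_infsum[OF pmf_abs_summable[of p UNIV]] infsetsum_pmf_eq_1[of p UNIV] by simp

lemma summable_on_average_pmf: "(\<lambda>y. pmf p y * (1/2) + pmf q y * (1/2)) summable_on A"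
  by (intro summable_on_add summable_on_cmult_left pmf_summable_on)

lemma infsum_average_pmf: "(\<Sum>\<^sub>\<infinity>y. pmf p y * (1/2) + pmf q y * (1/2)) = 1"
proof -
  have s: "\<And>r. (\<lambda>y. pmf r y * (1/2)) summable_on UNIV"
    by (intro summable_on_cmult_left pmf_summable_on)
  have "(\<Sum>\<^sub>\<infinity>y. pmf p y * (1/2) + pmf q y * (1/2))
      = (\<Sum>\<^sub>\<infinity>y. pmf p y * (1/2)) + (\<Sum>\<^sub>\<infinity>y. pmf q y * (1/2))"
    by (rule infsum_add[OF s s])
  also have "\<dots> = 1" by (simp only: infsum_cmult_left' infsum_pmf_eq_1)
  finally show ?thesis .
qed

lemma summable_on_diff:
  fixes f g :: "'a \<Rightarrow> 'b::topological_ab_group_add"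
  assumes "f summable_on A" "g summable_on A"
  shows "(\<lambda>x. f x - g x) summable_on A"
  using summable_on_add[OF assms(1) summable_on_uminus[THEN iffD2, OF assms(2)]] by simp

lemma infsum_diff:
  fixes f g :: "'a \<Rightarrow> 'b::{topological_ab_group_add, t2_space}"
  assumes "f summable_on A" "g summable_on A"
  shows "(\<Sum>\<^sub>\<infinity>x\<in>A. f x - g x) = infsum f A - infsum g A"
  using infsum_add[OF assms(1) summable_on_uminus[THEN iffD2, OF assms(2)]] by (simp add: infsum_uminus)

lemma infsum_prod_UNIV:
  fixes f :: "'a \<times> 'b \<Rightarrow> real"
  assumes "f summable_on UNIV"
  shows "infsum f UNIV = (\<Sum>\<^sub>\<infinity>t. \<Sum>\<^sub>\<infinity>y. f (t, y))"
    and "(\<lambda>t. \<Sum>\<^sub>\<infinity>y. f (t, y)) summable_on UNIV"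
proof -
  have Sigma: "(\<lambda>(t, y). f (t, y)) summable_on (Sigma (UNIV :: 'a set) (\<lambda>_. UNIV))"
    using assms by (simp add: case_prod_unfold)
  show "infsum f UNIV = (\<Sum>\<^sub>\<infinity>t. \<Sum>\<^sub>\<infinity>y. f (t, y))"
    using infsum_Sigma'_banach[of "\<lambda>t y. f (t, y)" UNIV "\<lambda>_. UNIV"] Sigma
    by (simp add: case_prod_unfold)
  show "(\<lambda>t. \<Sum>\<^sub>\<infinity>y. f (t, y)) summable_on UNIV"
    using summable_on_Sigma_banach[of "\<lambda>t y. f (t, y)" UNIV "\<lambda>_. UNIV"] Sigma by simp
qed

lemma infsum_prod_UNIV_swap:
  fixes f :: "'a \<times> 'b \<Rightarrow> real"
  assumes "f summable_on UNIV"
  shows "infsum f UNIV = (\<Sum>\<^sub>\<infinity>w. \<Sum>\<^sub>\<infinity>e. f (e, w))"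
    and "(\<lambda>w. \<Sum>\<^sub>\<infinity>e. f (e, w)) summable_on UNIV"
proof -
  have bij: "bij_betw prod.swap (UNIV :: ('b \<times> 'a) set) UNIV"
    by (simp add: bij_betw_def)
  have swapped: "(f \<circ> prod.swap) summable_on UNIV"
    using summable_on_reindex_bij_betw[OF bij, of f] assms by (simp add: o_def)
  have "infsum f UNIV = infsum (f \<circ> prod.swap) UNIV"
    using infsum_reindex_bij_betw[OF bij, of f] by (simp add: o_def)
  also have "\<dots> = (\<Sum>\<^sub>\<infinity>w. \<Sum>\<^sub>\<infinity>e. f (e, w))"
    by (simp add: infsum_prod_UNIV(1)[OF swapped])
  finally show "infsum f UNIV = (\<Sum>\<^sub>\<infinity>w. \<Sum>\<^sub>\<infinity>e. f (e, w))" .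
  show "(\<lambda>w. \<Sum>\<^sub>\<infinity>e. f (e, w)) summable_on UNIV"
    using infsum_prod_UNIV(2)[OF swapped] by simp
qed

lemma integrable_measure_pmf_iff_summable_on:
  fixes f :: "'a \<Rightarrow> real"
  shows "integrable (measure_pmf p) f \<longleftrightarrow> (\<lambda>x. pmf p x * f x) summable_on UNIV"
proof -
  have "integrable (measure_pmf p) f \<longleftrightarrow> integrable (count_space UNIV) (\<lambda>x. pmf p x * f x)"
    unfolding measure_pmf_eq_density by (subst integrable_density) auto
  also have "\<dots> \<longleftrightarrow> Infinite_Set_Sum.abs_summable_on (\<lambda>x. pmf p x * f x) UNIV"
    by (simp add: Infinite_Set_Sum.abs_summable_on_def)
  also have "\<dots> \<longleftrightarrow> Infinite_Sum.abs_summable_on (\<lambda>x. pmf p x * f x) UNIV"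
    by (rule abs_summable_equivalent[symmetric])
  also have "\<dots> \<longleftrightarrow> (\<lambda>x. pmf p x * f x) summable_on UNIV"
    by (rule summable_on_iff_abs_summable_on_real[symmetric])
  finally show ?thesis .
qed

lemma expectation_pmf_eq_infsum:
  fixes f :: "'a \<Rightarrow> real"
  assumes "integrable (measure_pmf p) f"
  shows "measure_pmf.expectation p f = (\<Sum>\<^sub>\<infinity>x. pmf p x * f x)"
proof -
  have "Infinite_Set_Sum.abs_summable_on (\<lambda>x. pmf p x * f x) UNIV"
    using assms unfolding measure_pmf_eq_density
    by (subst (asm) integrable_density) (auto simp: Infinite_Set_Sum.abs_summable_on_def)
  moreover have "measure_pmf.expectation p f = infsetsum (\<lambda>x. pmf p x * f x) UNIV"
    unfolding measure_pmf_eq_density infsetsum_def by (subst integral_density) auto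
  ultimately show ?thesis by (simp add: infsetsum_infsum)
qed

lemma pmf_map_inj_on:
  assumes "inj_on f U" "set_pmf p \<subseteq> U" "y \<in> U"
  shows "pmf (map_pmf f p) (f y) = pmf p y"
proof -
  have "pmf (map_pmf f p) (f y) = measure p (f -` {f y} \<inter> set_pmf p)"
    by (simp add: pmf_map measure_Int_set_pmf)
  also have "f -` {f y} \<inter> set_pmf p = {y} \<inter> set_pmf p"
    using assms by (auto simp: inj_on_def)
  finally show ?thesis by (simp add: measure_Int_set_pmf measure_pmf_single)
qed

lemma pmf_le_pmf_map: "pmf p x \<le> pmf (map_pmf f p) (f x)"
proof -
  have "measure p {x} \<le> measure p (f -` {f x})"
    by (rule measure_pmf.finite_measure_mono) auto
  then show ?thesis by (simp add: measure_pmf_single pmf_map)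
qed

lemma pmf_map_pair_left: "pmf (map_pmf (\<lambda>y. (y, w')) p) (y, w) = (if w' = w then pmf p y else 0)"
proof (cases "w' = w")
  case True
  then show ?thesis using pmf_map_inj'[of "\<lambda>y. (y, w')" p y] by (simp add: inj_on_def)
qed (intro trans[OF pmf_map_outside], auto)

lemma pmf_map_pair_right: "pmf (map_pmf (\<lambda>y. (t', y)) p) (t, y) = (if t' = t then pmf p y else 0)"
proof (cases "t' = t")
  case True
  then show ?thesis using pmf_map_inj'[of "\<lambda>y. (t', y)" p y] by (simp add: inj_on_def)
qed (intro trans[OF pmf_map_outside], auto)

lemma pmf_map_Cons: "pmf (map_pmf (Cons y) S) (z # zs) = (if y = z then pmf S zs else 0)"
proof (cases "y = z")
  case True
  then show ?thesis using pmf_map_inj'[of "Cons y" S zs] by (simp add: inj_on_def)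
qed (intro trans[OF pmf_map_outside], auto)

lemma pmf_bind_pair_channel:
  fixes K :: "(bool \<times> 'w) pmf" and N :: "bool \<Rightarrow> 'y pmf"
  shows "pmf (K \<bind> (\<lambda>(x, w'). map_pmf (\<lambda>y. (y, w')) (N x))) (y, w) =
         pmf K (True, w) * pmf (N True) y + pmf K (False, w) * pmf (N False) y"
proof -
  have "pmf (K \<bind> (\<lambda>(x, w'). map_pmf (\<lambda>y. (y, w')) (N x))) (y, w) =
        measure_pmf.expectation K (\<lambda>(x, w'). if w' = w then pmf (N x) y else 0)"
    by (simp add: pmf_bind pmf_map_pair_left case_prod_unfold)
  also have "\<dots> = (\<Sum>z\<in>{(True, w), (False, w)}. (\<lambda>(x, w'). if w' = w then pmf (N x) y else 0) z * pmf K z)"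
    by (rule integral_measure_pmf_real) (auto split: if_splits)
  finally show ?thesis by simp
qed

lemma seq_pmf_snoc: "seq_pmf (ps @ [p]) = seq_pmf ps \<bind> (\<lambda>ys. map_pmf (\<lambda>y. ys @ [y]) p)"
  by (induction ps) (simp_all add: bind_return_pmf map_pmf_def bind_assoc_pmf)

lemma seq_pmf_map_map: "seq_pmf (map (map_pmf f) ps) = map_pmf (map f) (seq_pmf ps)"
  by (induction ps) (simp_all add: map_bind_pmf bind_map_pmf pmf.map_comp o_def)

lemma length_in_set_seq_pmf: "ys \<in> set_pmf (seq_pmf ps) \<Longrightarrow> length ys = length ps"
  by (induction ps arbitrary: ys) auto

lemma bind_seq_pmf_map_butlast:
  assumes "xs \<noteq> []"
  shows "seq_pmf (map N xs) \<bind> (\<lambda>ys. return_pmf (h ys)) =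
         seq_pmf (map N (butlast xs)) \<bind> (\<lambda>ys. N (last xs) \<bind> (\<lambda>y. return_pmf (h (ys @ [y]))))"
proof -
  have "map N xs = map N (butlast xs) @ [N (last xs)]"
    using append_butlast_last_id[OF assms] by (metis map_append list.map(1,2))
  then show ?thesis by (simp add: seq_pmf_snoc bind_assoc_pmf map_pmf_def bind_return_pmf)
qed

lemma map_seq_pmf_last_first:
  assumes "xs \<noteq> []"
  shows "map_pmf h (seq_pmf (map N xs)) =
         N (last xs) \<bind> (\<lambda>y. map_pmf (\<lambda>ys. h (ys @ [y])) (seq_pmf (map N (butlast xs))))"
  unfolding map_pmf_def bind_seq_pmf_map_butlast[OF assms] by (rule bind_commute_pmf)

section \<open>Chi-square capacity and mutual information\<close>

definition chi2_cap_term :: "real \<Rightarrow> real \<Rightarrow> real" where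
  "chi2_cap_term a b = (a - b)^2 / (2 * (a + b))"

definition chi2_cap :: "(bool \<Rightarrow> 'y pmf) \<Rightarrow> real" where
  "chi2_cap W = (\<Sum>\<^sub>\<infinity>y. chi2_cap_term (pmf (W True) y) (pmf (W False) y))"

lemma chi2_cap_term_same [simp]: "chi2_cap_term a a = 0"
  by (simp add: chi2_cap_term_def)

lemma chi2_cap_term_nonneg: "0 \<le> a \<Longrightarrow> 0 \<le> b \<Longrightarrow> 0 \<le> chi2_cap_term a b"
  by (simp add: chi2_cap_term_def)

lemma chi2_cap_term_le_average:
  assumes "0 \<le> a" "0 \<le> b"
  shows "chi2_cap_term a b \<le> (a + b) / 2"
proof (cases "a + b = 0")
  case False
  then have pos: "a + b > 0" using assms by auto
  have "(a - b)^2 \<le> (a + b)^2" using assms by (simp add: power2_eq_square algebra_simps)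
  then have "(a - b)^2 / (2 * (a + b)) \<le> (a + b)^2 / (2 * (a + b))"
    using pos by (intro divide_right_mono) auto
  also have "\<dots> = (a + b) / 2" using pos by (simp add: power2_eq_square field_simps)
  finally show ?thesis by (simp add: chi2_cap_term_def)
qed (simp add: chi2_cap_term_def)

lemma chi2_cap_term_scale:
  assumes "0 \<le> c"
  shows "chi2_cap_term (c * a) (c * b) = c * chi2_cap_term a b"
proof (cases "c = 0")
  case False
  have "chi2_cap_term (c * a) (c * b) = c * (c * (a - b)^2) / (c * (2 * (a + b)))"
    unfolding chi2_cap_term_def by (simp add: power2_eq_square algebra_simps)
  also have "\<dots> = c * (a - b)^2 / (2 * (a + b))"
    using False by (rule nonzero_mult_divide_mult_cancel_left)
  finally show ?thesis by (simp add: chi2_cap_term_def)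
qed (simp add: chi2_cap_term_def)

lemma chi2_cap_term_summable_on:
  "(\<lambda>y. chi2_cap_term (pmf (W True) y) (pmf (W False) y)) summable_on A"
proof (rule summable_on_comparison_test[OF summable_on_average_pmf[of "W True" "W False"]])
  fix y
  show "0 \<le> chi2_cap_term (pmf (W True) y) (pmf (W False) y)"
    by (simp add: chi2_cap_term_nonneg)
  show "chi2_cap_term (pmf (W True) y) (pmf (W False) y) \<le> pmf (W True) y * (1/2) + pmf (W False) y * (1/2)"
    using chi2_cap_term_le_average[OF pmf_nonneg pmf_nonneg, of "W True" y "W False" y] by simp
qed

lemma chi2_cap_nonneg: "0 \<le> chi2_cap W"
  unfolding chi2_cap_def by (intro infsum_nonneg chi2_cap_term_nonneg pmf_nonneg)

lemma chi2_cap_le_1: "chi2_cap W \<le> 1"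
proof -
  have "chi2_cap W \<le> (\<Sum>\<^sub>\<infinity>y. pmf (W True) y * (1/2) + pmf (W False) y * (1/2))"
    unfolding chi2_cap_def
  proof (intro infsum_mono chi2_cap_term_summable_on summable_on_average_pmf)
    fix y
    show "chi2_cap_term (pmf (W True) y) (pmf (W False) y) \<le> pmf (W True) y * (1/2) + pmf (W False) y * (1/2)"
      using chi2_cap_term_le_average[OF pmf_nonneg pmf_nonneg, of "W True" y "W False" y] by simp
  qed
  then show ?thesis using infsum_average_pmf[of "W True" "W False"] by linarith
qed

lemma chi2_cap_map_pmf_inj_on:
  assumes inj: "inj_on f (set_pmf (W True) \<union> set_pmf (W False))"
  shows "chi2_cap (\<lambda>s. map_pmf f (W s)) = chi2_cap W"
proof -
  let ?U = "set_pmf (W True) \<union> set_pmf (W False)"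
  let ?g = "\<lambda>z. chi2_cap_term (pmf (map_pmf f (W True)) z) (pmf (map_pmf f (W False)) z)"
  have "chi2_cap (\<lambda>s. map_pmf f (W s)) = infsum ?g (f ` ?U)"
    unfolding chi2_cap_def
  proof (rule infsum_cong_neutral)
    fix z assume "z \<in> UNIV - f ` ?U"
    then have "z \<notin> f ` set_pmf (W True)" "z \<notin> f ` set_pmf (W False)" by auto
    then show "?g z = 0" by (simp add: pmf_map_outside)
  qed auto
  also have "\<dots> = infsum (?g \<circ> f) ?U" by (rule infsum_reindex[OF inj])
  also have "\<dots> = infsum (\<lambda>y. chi2_cap_term (pmf (W True) y) (pmf (W False) y)) ?U"
    by (intro infsum_cong) (simp add: pmf_map_inj_on[OF inj])
  also have "\<dots> = chi2_cap W"
    unfolding chi2_cap_def by (rule infsum_cong_neutral) (auto simp: set_pmf_iff)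
  finally show ?thesis .
qed

definition chi2_ratio :: "('a \<times> 'b) pmf \<Rightarrow> 'a \<times> 'b \<Rightarrow> real" where
  "chi2_ratio P z = (pmf P z)\<^sup>2 / (pmf (map_pmf fst P) (fst z) * pmf (map_pmf snd P) (snd z))"

lemma chi2_info_pmf_eq_infsum_chi2_ratio: "chi2_info_pmf P = (\<Sum>\<^sub>\<infinity>z. chi2_ratio P z) - 1"
  unfolding chi2_info_pmf_def chi2_ratio_def ..

lemma mult_ln_div_bounds:
  fixes p q :: real
  assumes "0 \<le> p" "0 \<le> q" "0 < p \<Longrightarrow> 0 < q"
  shows "p - q \<le> p * ln (p / q)" and "p * ln (p / q) \<le> p^2 / q - p"
proof -
  consider "p = 0" | "0 < p" "0 < q" using assms by force
  then have "p - q \<le> p * ln (p / q) \<and> p * ln (p / q) \<le> p^2 / q - p"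
  proof cases
    case 2
    have "ln (q / p) \<le> q / p - 1" "ln (p / q) \<le> p / q - 1"
      using 2 by (simp_all add: ln_le_minus_one)
    then have "p * (1 - q / p) \<le> p * ln (p / q)" "p * ln (p / q) \<le> p * (p / q - 1)"
      using 2 by (simp_all add: ln_div mult_left_mono)
    then show ?thesis using 2 by (simp add: power2_eq_square algebra_simps)
  qed (use assms in simp)
  then show "p - q \<le> p * ln (p / q)" and "p * ln (p / q) \<le> p^2 / q - p" by simp_all
qed

text \<open>
  Summability of the chi-square ratio makes the log-likelihood ratio integrable, so the integral
  defining \<open>mutual_info_pmf\<close> is not the junk value 0 here.
\<close>

lemma mutual_info_pmf_bounds:
  assumes summable: "chi2_ratio P summable_on UNIV"
  shows "0 \<le> mutual_info_pmf P \<and> mutual_info_pmf P \<le> chi2_info_pmf P"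
proof -
  define Q where "Q z = pmf (map_pmf fst P) (fst z) * pmf (map_pmf snd P) (snd z)" for z
  define g where "g z = ln (pmf P z / Q z)" for z
  have Q_pair: "Q z = pmf (pair_pmf (map_pmf fst P) (map_pmf snd P)) z" for z
    by (cases z) (simp add: Q_def pmf_pair)
  have Q_summable: "Q summable_on UNIV" unfolding Q_pair[abs_def] by (rule pmf_summable_on)
  have Q_sum: "(\<Sum>\<^sub>\<infinity>z. Q z) = 1" unfolding Q_pair by (rule infsum_pmf_eq_1)
  have Q_pos: "Q z > 0" if "pmf P z > 0" for z
    using that pmf_le_pmf_map[of P z fst] pmf_le_pmf_map[of P z snd] by (simp add: Q_def)
  have bounds: "pmf P z - Q z \<le> pmf P z * g z" "pmf P z * g z \<le> chi2_ratio P z - pmf P z" for z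
    using mult_ln_div_bounds[of "pmf P z" "Q z"] Q_pos[of z]
    by (simp_all add: g_def chi2_ratio_def Q_def)
  note lower = bounds(1) and upper = bounds(2)
  have up_summable: "(\<lambda>z. chi2_ratio P z - pmf P z) summable_on UNIV"
    by (intro summable_on_diff summable pmf_summable_on)
  have low_summable: "(\<lambda>z. pmf P z - Q z) summable_on UNIV"
    by (intro summable_on_diff Q_summable pmf_summable_on)
  have "(\<lambda>z. pmf P z * g z - (pmf P z - Q z)) summable_on UNIV"
  proof (rule summable_on_comparison_test[OF summable_on_diff[OF up_summable low_summable]])
    fix z
    show "pmf P z * g z - (pmf P z - Q z) \<le> chi2_ratio P z - pmf P z - (pmf P z - Q z)"
      using upper[of z] by simp
    show "0 \<le> pmf P z * g z - (pmf P z - Q z)" using lower[of z] by simp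
  qed
  from summable_on_add[OF this low_summable]
  have g_summable: "(\<lambda>z. pmf P z * g z) summable_on UNIV" by simp
  have "mutual_info_pmf P = measure_pmf.expectation P g"
    unfolding mutual_info_pmf_def g_def Q_def by (simp add: case_prod_unfold)
  also have "\<dots> = (\<Sum>\<^sub>\<infinity>z. pmf P z * g z)"
    by (rule expectation_pmf_eq_infsum)
      (use g_summable integrable_measure_pmf_iff_summable_on in blast)
  finally have MI: "mutual_info_pmf P = (\<Sum>\<^sub>\<infinity>z. pmf P z * g z)" .
  have "0 = (\<Sum>\<^sub>\<infinity>z. pmf P z - Q z)"
    by (simp add: infsum_diff[OF pmf_summable_on Q_summable] infsum_pmf_eq_1 Q_sum)
  also have "\<dots> \<le> (\<Sum>\<^sub>\<infinity>z. pmf P z * g z)" by (rule infsum_mono[OF low_summable g_summable lower])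
  finally have "0 \<le> mutual_info_pmf P" unfolding MI .
  moreover have "(\<Sum>\<^sub>\<infinity>z. pmf P z * g z) \<le> (\<Sum>\<^sub>\<infinity>z. chi2_ratio P z - pmf P z)"
    by (rule infsum_mono[OF g_summable up_summable upper])
  then have "mutual_info_pmf P \<le> chi2_info_pmf P"
    unfolding MI infsum_diff[OF summable pmf_summable_on] infsum_pmf_eq_1
    by (simp add: chi2_info_pmf_eq_infsum_chi2_ratio)
  ultimately show ?thesis ..
qed

definition uniform_input_joint :: "(bool \<Rightarrow> 'y pmf) \<Rightarrow> (bool \<times> 'y) pmf" where
  "uniform_input_joint W = pmf_of_set UNIV \<bind> (\<lambda>s. map_pmf (\<lambda>y. (s, y)) (W s))"

lemma expectation_uniform_bool:
  fixes f :: "bool \<Rightarrow> real"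
  shows "measure_pmf.expectation (pmf_of_set (UNIV :: bool set)) f = (f True + f False) / 2"
  by (subst integral_measure_pmf_real[where A=UNIV]) (auto simp: UNIV_bool field_simps)

lemma pmf_uniform_input_joint: "pmf (uniform_input_joint W) (s, y) = pmf (W s) y / 2"
  by (cases s) (simp_all add: uniform_input_joint_def pmf_bind expectation_uniform_bool pmf_map_pair_right)

lemma pmf_uniform_input_joint_fst: "pmf (map_pmf fst (uniform_input_joint W)) s = 1 / 2"
  by (simp add: uniform_input_joint_def map_bind_pmf pmf.map_comp o_def map_pmf_const
      bind_return_pmf' UNIV_bool)

lemma pmf_uniform_input_joint_snd:
  "pmf (map_pmf snd (uniform_input_joint W)) y = (pmf (W True) y + pmf (W False) y) / 2"
proof -
  have "map_pmf snd (uniform_input_joint W) = pmf_of_set UNIV \<bind> W"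
    by (simp add: uniform_input_joint_def map_bind_pmf pmf.map_comp o_def pmf.map_ident)
  then show ?thesis by (simp add: pmf_bind expectation_uniform_bool)
qed

lemma chi2_ratio_uniform_input_joint:
  "chi2_ratio (uniform_input_joint W) (s, y) =
     (pmf (W s) y / 2)^2 / (1/2 * ((pmf (W True) y + pmf (W False) y) / 2))"
  by (simp add: chi2_ratio_def pmf_uniform_input_joint pmf_uniform_input_joint_fst
      pmf_uniform_input_joint_snd)

lemma chi2_ratio_pair_sum:
  fixes a b :: real
  assumes "0 \<le> a" "0 \<le> b"
  shows "(a / 2)^2 / (1/2 * ((a + b) / 2)) + (b / 2)^2 / (1/2 * ((a + b) / 2))
       = (a * (1/2) + b * (1/2)) + chi2_cap_term a b"
proof (cases "a + b = 0")
  case False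
  define t where "t = a + b"
  have t: "t \<noteq> 0" using False by (simp add: t_def)
  have "(a / 2)^2 / (1/2 * (t / 2)) + (b / 2)^2 / (1/2 * (t / 2))
        - ((a * (1/2) + b * (1/2)) + (a - b)^2 / (2 * t)) = 0"
    using t by (simp add: field_simps) (simp add: t_def power2_eq_square algebra_simps)
  then show ?thesis unfolding chi2_cap_term_def t_def by simp
qed (use assms in \<open>simp add: chi2_cap_term_def\<close>)

lemma chi2_ratio_uniform_input_joint_summable_on:
  "chi2_ratio (uniform_input_joint W) summable_on UNIV"
proof (rule summable_on_comparison_test)
  show "(\<lambda>z. 2 * pmf (uniform_input_joint W) z) summable_on UNIV"
    by (intro summable_on_cmult_right pmf_summable_on)
  fix z
  show "0 \<le> chi2_ratio (uniform_input_joint W) z" by (simp add: chi2_ratio_def)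
  obtain s y where z: "z = (s, y)" by (cases z)
  define a where "a = pmf (W s) y"
  define t where "t = pmf (W True) y + pmf (W False) y"
  have a: "0 \<le> a" "a \<le> t" unfolding a_def t_def by (cases s; simp)+
  have "chi2_ratio (uniform_input_joint W) z = a^2 / t"
    unfolding z chi2_ratio_uniform_input_joint a_def[symmetric] t_def[symmetric]
    by (simp add: power2_eq_square field_simps)
  also have "\<dots> \<le> a"
    using a by (cases "t = 0") (simp_all add: power2_eq_square divide_le_eq mult_left_mono)
  finally show "chi2_ratio (uniform_input_joint W) z \<le> 2 * pmf (uniform_input_joint W) z"
    by (simp add: z pmf_uniform_input_joint a_def)
qed

lemma chi2_info_uniform_input_joint: "chi2_info_pmf (uniform_input_joint W) = chi2_cap W"
proof -
  let ?T = "chi2_ratio (uniform_input_joint W)"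
  have "(\<Sum>\<^sub>\<infinity>z. ?T z) = (\<Sum>\<^sub>\<infinity>y. \<Sum>\<^sub>\<infinity>s. ?T (s, y))"
    by (rule infsum_prod_UNIV_swap(1)[OF chi2_ratio_uniform_input_joint_summable_on])
  also have "\<dots> = (\<Sum>\<^sub>\<infinity>y. (pmf (W True) y * (1/2) + pmf (W False) y * (1/2))
                          + chi2_cap_term (pmf (W True) y) (pmf (W False) y))"
  proof (rule infsum_cong)
    fix y
    have "(\<Sum>\<^sub>\<infinity>s. ?T (s, y)) = ?T (True, y) + ?T (False, y)"
      by (simp add: infsum_finite UNIV_bool)
    also have "\<dots> = (pmf (W True) y * (1/2) + pmf (W False) y * (1/2))
                    + chi2_cap_term (pmf (W True) y) (pmf (W False) y)"
      unfolding chi2_ratio_uniform_input_joint by (rule chi2_ratio_pair_sum) simp_all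
    finally show "(\<Sum>\<^sub>\<infinity>s. ?T (s, y)) = \<dots>" .
  qed
  also have "\<dots> = 1 + chi2_cap W"
    unfolding chi2_cap_def
    by (subst infsum_add[OF summable_on_average_pmf chi2_cap_term_summable_on])
      (simp only: infsum_average_pmf)
  finally show ?thesis by (simp add: chi2_info_pmf_eq_infsum_chi2_ratio)
qed

lemma C_chi2_eq_chi2_cap: "C_chi2 W = chi2_cap W"
  using chi2_info_uniform_input_joint[of W] by (simp add: C_chi2_def uniform_input_joint_def)

lemma mutual_info_uniform_input_joint_bounds:
  "0 \<le> mutual_info_pmf (uniform_input_joint W) \<and> mutual_info_pmf (uniform_input_joint W) \<le> chi2_cap W"
  using mutual_info_pmf_bounds[OF chi2_ratio_uniform_input_joint_summable_on]
  by (simp add: chi2_info_uniform_input_joint)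

section \<open>Binary memoryless symmetric channels and the erasure channel\<close>

definition BMS :: "(bool \<Rightarrow> 'y pmf) \<Rightarrow> ('y \<Rightarrow> 'y) \<Rightarrow> bool" where
  "BMS M \<sigma> \<longleftrightarrow> (\<forall>y. \<sigma> (\<sigma> y) = y) \<and> M False = map_pmf \<sigma> (M True)"

lemma BMS_involution: "BMS M \<sigma> \<Longrightarrow> \<sigma> (\<sigma> y) = y"
  by (simp add: BMS_def)

lemma BMS_bij: "BMS M \<sigma> \<Longrightarrow> bij \<sigma>"
  by (metis BMS_involution bij_betw_byWitness subset_UNIV)

lemma BMS_not: assumes "BMS M \<sigma>" shows "M (\<not> x) = map_pmf \<sigma> (M x)"
proof (cases x)
  case False
  have "map_pmf \<sigma> (M False) = map_pmf (\<sigma> \<circ> \<sigma>) (M True)"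
    using assms by (simp add: BMS_def pmf.map_comp)
  also have "\<sigma> \<circ> \<sigma> = id" using BMS_involution[OF assms] by (auto simp: fun_eq_iff)
  finally show ?thesis using False by (simp add: pmf.map_id)
qed (use assms in \<open>simp add: BMS_def\<close>)

lemma BMS_pmf_False: assumes "BMS M \<sigma>" shows "pmf (M False) y = pmf (M True) (\<sigma> y)"
proof -
  have "pmf (M False) y = pmf (map_pmf \<sigma> (M True)) (\<sigma> (\<sigma> y))"
    using assms by (simp add: BMS_def BMS_involution[OF assms])
  also have "\<dots> = pmf (M True) (\<sigma> y)"
    by (rule pmf_map_inj'[OF bij_is_inj[OF BMS_bij[OF assms]]])
  finally show ?thesis .
qed

lemma BMS_pmf_True: assumes "BMS M \<sigma>" shows "pmf (M True) y = pmf (M False) (\<sigma> y)"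
  using BMS_pmf_False[OF assms, of "\<sigma> y"] BMS_involution[OF assms] by simp

lemma BMS_bind_seq_pmf:
  assumes bms: "BMS M \<sigma>" and flip: "B False = map_pmf (map Not) (B True)"
  shows "BMS (\<lambda>s. B s \<bind> (\<lambda>xs. seq_pmf (map M xs))) (map \<sigma>)"
  unfolding BMS_def
proof
  show "\<forall>y. map \<sigma> (map \<sigma> y) = y" using BMS_involution[OF bms] by (simp add: map_idI)
  have "B False \<bind> (\<lambda>xs. seq_pmf (map M xs)) = B True \<bind> (\<lambda>xs. seq_pmf (map (\<lambda>x. M (\<not> x)) xs))"
    unfolding flip by (simp add: bind_map_pmf o_def)
  also have "\<dots> = B True \<bind> (\<lambda>xs. map_pmf (map \<sigma>) (seq_pmf (map M xs)))"
    by (simp add: BMS_not[OF bms] seq_pmf_map_map[symmetric] o_def)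
  finally show "B False \<bind> (\<lambda>xs. seq_pmf (map M xs)) = map_pmf (map \<sigma>) (B True \<bind> (\<lambda>xs. seq_pmf (map M xs)))"
    by (simp add: map_bind_pmf)
qed

lemma inj_BEC_fun: "inj (\<lambda>b. if b then None else Some x)"
  by (auto simp: inj_def split: if_splits)

lemma pmf_BEC_None: assumes "0 \<le> e" "e \<le> 1" shows "pmf (BEC e x) None = e"
  using pmf_map_inj'[OF inj_BEC_fun[of x], of "bernoulli_pmf e" True] assms by (simp add: BEC_def)

lemma pmf_BEC_Some:
  assumes "0 \<le> e" "e \<le> 1"
  shows "pmf (BEC e x) (Some x') = (if x' = x then 1 - e else 0)"
proof (cases "x' = x")
  case True
  then show ?thesis
    using pmf_map_inj'[OF inj_BEC_fun[of x], of "bernoulli_pmf e" False] assms by (simp add: BEC_def)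
qed (unfold BEC_def, intro trans[OF pmf_map_outside], auto)

lemma pmf_seq_BEC_all_None:
  assumes "0 \<le> e" "e \<le> 1"
  shows "pmf (seq_pmf (map (BEC e) xs)) (replicate (length xs) None) = e ^ length xs"
proof (induction xs)
  case (Cons x xs)
  let ?rest = "pmf (seq_pmf (map (BEC e) xs)) (replicate (length xs) None)"
  have "pmf (seq_pmf (map (BEC e) (x # xs))) (replicate (length (x # xs)) None)
      = measure_pmf.expectation (BEC e x) (\<lambda>y. if y = None then ?rest else 0)"
    by (simp add: pmf_bind pmf_map_Cons)
  also have "\<dots> = (\<Sum>y\<in>{None}. (if y = None then ?rest else 0) * pmf (BEC e x) y)"
    by (rule integral_measure_pmf_real) (auto split: if_splits)
  also have "\<dots> = e ^ length (x # xs)" using Cons assms by (simp add: pmf_BEC_None)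
  finally show ?case .
qed simp

text \<open>
  The all-erased output has mass \<open>(1 - \<epsilon>)\<^sup>n\<close> under both inputs and contributes nothing, every
  other output at most its average mass; finally \<open>1 - (1 - \<epsilon>)\<^sup>n \<le> n \<epsilon>\<close>.
\<close>

lemma chi2_cap_bind_seq_BEC_le:
  fixes J :: "bool \<Rightarrow> 'a list pmf"
  assumes e: "0 \<le> \<epsilon>" "\<epsilon> \<le> 1"
    and len: "\<And>s xs. xs \<in> set_pmf (J s) \<Longrightarrow> length xs = n"
  shows "chi2_cap (\<lambda>s. J s \<bind> (\<lambda>xs. seq_pmf (map (BEC (1 - \<epsilon>)) xs))) \<le> real n * \<epsilon>"
proof -
  define W where "W s = J s \<bind> (\<lambda>xs. seq_pmf (map (BEC (1 - \<epsilon>)) xs))" for s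
  define z0 where "z0 = (replicate n None :: 'a option list)"
  define c where "c = (1 - \<epsilon>) ^ n"
  have pmf_z0: "pmf (W s) z0 = c" for s
  proof -
    have "pmf (W s) z0 = measure_pmf.expectation (J s) (\<lambda>xs. pmf (seq_pmf (map (BEC (1 - \<epsilon>)) xs)) z0)"
      by (simp add: W_def pmf_bind)
    also have "\<dots> = measure_pmf.expectation (J s) (\<lambda>_. c)"
      by (intro integral_cong_AE)
        (auto simp: AE_measure_pmf_iff z0_def c_def e len[symmetric] pmf_seq_BEC_all_None)
    finally show ?thesis by simp
  qed
  define h where "h y = (pmf (W True) y * (1/2) + pmf (W False) y * (1/2)) - (if y = z0 then c else 0)" for y
  have point_summable: "(\<lambda>y. if y = z0 then c else 0) summable_on UNIV"
    by (rule summable_on_cong_neutral[where S="{z0}" and f="\<lambda>_. c", THEN iffD1]) auto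
  have point_sum: "(\<Sum>\<^sub>\<infinity>y. if y = z0 then c else 0) = c"
    using infsum_cong_neutral[of "{z0}" UNIV "\<lambda>_. c" "\<lambda>y. if y = z0 then c else 0"] by auto
  have h_summable: "h summable_on UNIV"
    unfolding h_def by (rule summable_on_diff[OF summable_on_average_pmf point_summable])
  have "chi2_cap W \<le> (\<Sum>\<^sub>\<infinity>y. h y)"
    unfolding chi2_cap_def
  proof (rule infsum_mono[OF chi2_cap_term_summable_on h_summable])
    fix y
    show "chi2_cap_term (pmf (W True) y) (pmf (W False) y) \<le> h y"
      using chi2_cap_term_le_average[OF pmf_nonneg pmf_nonneg, of "W True" y "W False" y]
      by (cases "y = z0") (simp_all add: h_def pmf_z0)
  qed
  also have "\<dots> = 1 - (1 - \<epsilon>) ^ n"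
    unfolding h_def infsum_diff[OF summable_on_average_pmf point_summable]
    by (simp only: infsum_average_pmf point_sum) (simp add: c_def)
  also have "\<dots> \<le> real n * \<epsilon>"
    using Bernoulli_inequality[of "- \<epsilon>" n] e by simp
  finally show ?thesis unfolding W_def .
qed

lemma two_mult_chi2_cap_term: "2 * chi2_cap_term a b = (a - b)^2 / (a + b)"
  unfolding chi2_cap_term_def by (cases "a + b = 0") (simp_all add: field_simps)

lemma chi2_cap_term_pair_identity:
  fixes a b up um vp vm s C D1 D2 :: real
  assumes e: "s = a + b" "C = vp + vm" "D1 = vp * a + vm * b" "D2 = vp * b + vm * a"
   and n: "s \<noteq> 0" "C \<noteq> 0" "vp \<noteq> 0" "vm \<noteq> 0" "D1 \<noteq> 0" "D2 \<noteq> 0"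
  shows "(s/2 - (a-b)^2/(2 * s)) * ((up+um)^2/C) + (a-b)^2/(2 * s) * (up^2/vp + um^2/vm)
     - (up * a+um * b)^2/(2 * D1) - (up * b+um * a)^2/(2 * D2)
     = (a-b)^2 * a * b * (vp-vm)^2 * (um * vp-up * vm)^2/(2 * s * C * vp * vm * D1 * D2)"
proof -
  have "(s/2 - (a-b)^2/(2 * s)) * ((up+um)^2/C) + (a-b)^2/(2 * s) * (up^2/vp + um^2/vm)
     - (up * a+um * b)^2/(2 * D1) - (up * b+um * a)^2/(2 * D2) -
     (a-b)^2 * a * b * (vp-vm)^2 * (um * vp-up * vm)^2/(2 * s * C * vp * vm * D1 * D2) = 0"
    using n by (simp add: field_simps) (use e in algebra)
  then show ?thesis by simp
qed

lemma chi2_cap_term_pair_le_nondegenerate: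
  fixes p1 p2 q1 q2 a b :: real
  assumes nn: "0 \<le> p1" "0 \<le> p2" "0 \<le> q1" "0 \<le> q2" "0 \<le> a" "0 \<le> b"
    and nondeg: "a + b \<noteq> 0" "p1 + q1 \<noteq> 0" "p2 + q2 \<noteq> 0"
  shows "chi2_cap_term (p1 * a + p2 * b) (q1 * a + q2 * b) + chi2_cap_term (p1 * b + p2 * a) (q1 * b + q2 * a)
     \<le> 2 * ((a + b) / 2 - chi2_cap_term a b) * chi2_cap_term (p1 + p2) (q1 + q2)
        + 2 * chi2_cap_term a b * (chi2_cap_term p1 q1 + chi2_cap_term p2 q2)"
proof -
  define up where "up = p1 - q1"
  define um where "um = p2 - q2"
  define vp where "vp = p1 + q1"
  define vm where "vm = p2 + q2"
  define s where "s = a + b"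
  define C where "C = vp + vm"
  define D1 where "D1 = vp * a + vm * b"
  define D2 where "D2 = vp * b + vm * a"
  have vpos: "vp > 0" "vm > 0" using nondeg nn by (auto simp: vp_def vm_def)
  have spos: "s > 0" using nondeg nn by (auto simp: s_def)
  have D1pos: "D1 > 0" unfolding D1_def using vpos nn spos s_def
    by (smt (verit, best) mult_nonneg_nonneg mult_pos_pos)
  have D2pos: "D2 > 0" unfolding D2_def using vpos nn spos s_def
    by (smt (verit, best) mult_nonneg_nonneg mult_pos_pos)
  have Cpos: "C > 0" using vpos by (simp add: C_def)
  have id: "(s/2 - (a-b)^2/(2 * s)) * ((up+um)^2/C) + (a-b)^2/(2 * s) * (up^2/vp + um^2/vm)
   - (up * a+um * b)^2/(2 * D1) - (up * b+um * a)^2/(2 * D2)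
   = (a-b)^2 * a * b * (vp-vm)^2 * (um * vp-up * vm)^2/(2 * s * C * vp * vm * D1 * D2)"
    by (rule chi2_cap_term_pair_identity)
      (use vpos spos D1pos D2pos Cpos in \<open>auto simp: s_def C_def D1_def D2_def\<close>)
  have defect_nonneg:
    "(a-b)^2 * a * b * (vp-vm)^2 * (um * vp-up * vm)^2/(2 * s * C * vp * vm * D1 * D2) \<ge> 0"
    using vpos spos D1pos D2pos Cpos nn by (intro divide_nonneg_nonneg) auto
  have e1: "chi2_cap_term (p1 * a + p2 * b) (q1 * a + q2 * b) = (up * a+um * b)^2/(2 * D1)"
    unfolding chi2_cap_term_def up_def um_def D1_def vp_def vm_def by (simp add: algebra_simps)
  have e2: "chi2_cap_term (p1 * b + p2 * a) (q1 * b + q2 * a) = (up * b+um * a)^2/(2 * D2)"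
    unfolding chi2_cap_term_def up_def um_def D2_def vp_def vm_def by (simp add: algebra_simps)
  have e3: "chi2_cap_term a b = (a-b)^2/(2 * s)" by (simp add: chi2_cap_term_def s_def)
  have e4: "2 * chi2_cap_term (p1 + p2) (q1 + q2) = (up+um)^2/C"
    unfolding two_mult_chi2_cap_term up_def um_def C_def vp_def vm_def by (simp add: algebra_simps)
  have e5: "2 * (chi2_cap_term p1 q1 + chi2_cap_term p2 q2) = up^2/vp + um^2/vm"
    unfolding distrib_left two_mult_chi2_cap_term up_def um_def vp_def vm_def by (simp add: algebra_simps)
  have "(s/2 - (a-b)^2/(2 * s)) * ((up+um)^2/C) + (a-b)^2/(2 * s) * (up^2/vp + um^2/vm)
     = 2 * ((a + b) / 2 - chi2_cap_term a b) * chi2_cap_term (p1 + p2) (q1 + q2)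
      + 2 * chi2_cap_term a b * (chi2_cap_term p1 q1 + chi2_cap_term p2 q2)"
    unfolding e3[symmetric] e4[symmetric] e5[symmetric] by (simp add: s_def algebra_simps)
  then show ?thesis using id defect_nonneg e1 e2 by linarith
qed

text \<open>
  Here (a, b) are the masses of a BMS channel at an output y and (b, a) those at its flip
  \<open>\<sigma> y\<close>, while \<open>(p\<^sub>i, q\<^sub>i)\<close> describe the rest of the observation; the right-hand side is
  linear in \<open>chi2_cap_term a b\<close>.
\<close>

lemma chi2_cap_term_pair_le:
  fixes p1 p2 q1 q2 a b :: real
  assumes nn: "0 \<le> p1" "0 \<le> p2" "0 \<le> q1" "0 \<le> q2" "0 \<le> a" "0 \<le> b"
  shows "chi2_cap_term (p1 * a + p2 * b) (q1 * a + q2 * b) + chi2_cap_term (p1 * b + p2 * a) (q1 * b + q2 * a)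
     \<le> 2 * ((a + b) / 2 - chi2_cap_term a b) * chi2_cap_term (p1 + p2) (q1 + q2)
        + 2 * chi2_cap_term a b * (chi2_cap_term p1 q1 + chi2_cap_term p2 q2)"
proof -
  have scale: "chi2_cap_term (p * x) (q * x) = x * chi2_cap_term p q" if "0 \<le> x" for p q x
    using chi2_cap_term_scale[OF that, of p q] by (simp add: mult.commute)
  consider "a + b = 0" | "a + b \<noteq> 0" "p1 + q1 = 0" | "a + b \<noteq> 0" "p2 + q2 = 0"
    | "a + b \<noteq> 0" "p1 + q1 \<noteq> 0" "p2 + q2 \<noteq> 0" by blast
  then show ?thesis
  proof cases
    case 1
    then have "a = 0" "b = 0" using nn by auto
    then show ?thesis by (simp add: chi2_cap_term_def)
  next
    case 2
    then have "p1 = 0" "q1 = 0" using nn by auto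
    then show ?thesis using scale nn by (simp add: algebra_simps)
  next
    case 3
    then have "p2 = 0" "q2 = 0" using nn by auto
    then show ?thesis using scale nn by (simp add: algebra_simps)
  next
    case 4
    then show ?thesis using chi2_cap_term_pair_le_nondegenerate[OF nn] by blast
  qed
qed

lemma chi2_cap_term_mix_pair_infsum_le:
  fixes M :: "bool \<Rightarrow> 'y pmf"
  assumes nn: "0 \<le> p1" "0 \<le> p2" "0 \<le> q1" "0 \<le> q2"
  defines "S y \<equiv> chi2_cap_term (p1 * pmf (M True) y + p2 * pmf (M False) y) (q1 * pmf (M True) y + q2 * pmf (M False) y)
                + chi2_cap_term (p1 * pmf (M False) y + p2 * pmf (M True) y) (q1 * pmf (M False) y + q2 * pmf (M True) y)"
  shows "S summable_on UNIV"
    and "(\<Sum>\<^sub>\<infinity>y. S y) \<le> 2 * ((1 - chi2_cap M) * chi2_cap_term (p1 + p2) (q1 + q2)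
                                + chi2_cap M * (chi2_cap_term p1 q1 + chi2_cap_term p2 q2))"
proof -
  define a where "a y = pmf (M True) y" for y
  define b where "b y = pmf (M False) y" for y
  define C0 where "C0 = chi2_cap_term (p1 + p2) (q1 + q2)"
  define C1 where "C1 = chi2_cap_term p1 q1 + chi2_cap_term p2 q2"
  define H where "H y = (a y * (1/2) + b y * (1/2)) * (2 * C0)
                        + chi2_cap_term (a y) (b y) * (2 * C1 - 2 * C0)" for y
  have ab: "0 \<le> a y" "0 \<le> b y" for y by (simp_all add: a_def b_def)
  have S_le_H: "S y \<le> H y" for y
  proof -
    have "S y \<le> 2 * ((a y + b y) / 2 - chi2_cap_term (a y) (b y)) * C0 + 2 * chi2_cap_term (a y) (b y) * C1"
      unfolding S_def a_def[symmetric] b_def[symmetric] C0_def C1_def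
      by (rule chi2_cap_term_pair_le[OF nn ab[of y]])
    also have "\<dots> = H y" unfolding H_def by (simp add: field_simps)
    finally show ?thesis .
  qed
  have S_nonneg: "0 \<le> S y" for y
    unfolding S_def using nn by (intro add_nonneg_nonneg chi2_cap_term_nonneg) simp_all
  have avg: "(\<lambda>y. a y * (1/2) + b y * (1/2)) summable_on UNIV"
    unfolding a_def b_def by (rule summable_on_average_pmf)
  have cap: "(\<lambda>y. chi2_cap_term (a y) (b y)) summable_on UNIV"
    unfolding a_def b_def by (rule chi2_cap_term_summable_on)
  have H_summable: "H summable_on UNIV"
    unfolding H_def by (intro summable_on_add summable_on_cmult_left avg cap)
  show S_summable: "S summable_on UNIV"
    by (rule summable_on_comparison_test[OF H_summable S_le_H S_nonneg])
  have "(\<Sum>\<^sub>\<infinity>y. H y) = (\<Sum>\<^sub>\<infinity>y. (a y * (1/2) + b y * (1/2)) * (2 * C0))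
                       + (\<Sum>\<^sub>\<infinity>y. chi2_cap_term (a y) (b y) * (2 * C1 - 2 * C0))"
    unfolding H_def by (intro infsum_add summable_on_cmult_left avg cap)
  also have "\<dots> = (\<Sum>\<^sub>\<infinity>y. a y * (1/2) + b y * (1/2)) * (2 * C0)
                   + (\<Sum>\<^sub>\<infinity>y. chi2_cap_term (a y) (b y)) * (2 * C1 - 2 * C0)"
    by (simp only: infsum_cmult_left')
  also have "(\<Sum>\<^sub>\<infinity>y. a y * (1/2) + b y * (1/2)) = 1"
    unfolding a_def b_def by (rule infsum_average_pmf)
  also have "(\<Sum>\<^sub>\<infinity>y. chi2_cap_term (a y) (b y)) = chi2_cap M"
    unfolding chi2_cap_def a_def b_def ..
  finally have H_sum: "(\<Sum>\<^sub>\<infinity>y. H y) = 2 * C0 + chi2_cap M * (2 * C1 - 2 * C0)" by simp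
  have "(\<Sum>\<^sub>\<infinity>y. S y) \<le> (\<Sum>\<^sub>\<infinity>y. H y)" by (rule infsum_mono[OF S_summable H_summable S_le_H])
  then show "(\<Sum>\<^sub>\<infinity>y. S y) \<le> 2 * ((1 - chi2_cap M) * C0 + chi2_cap M * C1)"
    unfolding H_sum by (simp add: algebra_simps)
qed

text \<open>For a BMS channel both halves of the sum above agree, by the substitution \<open>y \<mapsto> \<sigma> y\<close>.\<close>

lemma infsum_chi2_cap_term_mix_BMS_le:
  fixes M :: "bool \<Rightarrow> 'y pmf"
  assumes bms: "BMS M \<sigma>" and nn: "0 \<le> p1" "0 \<le> p2" "0 \<le> q1" "0 \<le> q2"
  shows "(\<Sum>\<^sub>\<infinity>y. chi2_cap_term (p1 * pmf (M True) y + p2 * pmf (M False) y)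
                              (q1 * pmf (M True) y + q2 * pmf (M False) y))
     \<le> (1 - chi2_cap M) * chi2_cap_term (p1 + p2) (q1 + q2)
        + chi2_cap M * (chi2_cap_term p1 q1 + chi2_cap_term p2 q2)"
proof -
  define G where "G y = chi2_cap_term (p1 * pmf (M True) y + p2 * pmf (M False) y)
                                      (q1 * pmf (M True) y + q2 * pmf (M False) y)" for y
  define G' where "G' y = chi2_cap_term (p1 * pmf (M False) y + p2 * pmf (M True) y)
                                        (q1 * pmf (M False) y + q2 * pmf (M True) y)" for y
  note pair = chi2_cap_term_mix_pair_infsum_le[OF nn, of M, folded G_def G'_def]
  have G'_flip: "G' y = G (\<sigma> y)" for y
    using BMS_pmf_False[OF bms, of y] BMS_pmf_True[OF bms, of y] by (simp add: G'_def G_def)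
  have bij: "bij_betw \<sigma> UNIV UNIV" using BMS_bij[OF bms] by simp
  have G_summable: "G summable_on UNIV"
    by (rule summable_on_comparison_test[OF pair(1)]) (auto simp: G_def G'_def nn intro!: chi2_cap_term_nonneg)
  have G'_summable: "G' summable_on UNIV"
    using summable_on_reindex_bij_betw[OF bij, of G] G_summable by (simp add: G'_flip[abs_def])
  have "(\<Sum>\<^sub>\<infinity>y. G' y) = (\<Sum>\<^sub>\<infinity>y. G y)"
    using infsum_reindex_bij_betw[OF bij, of G] by (simp add: G'_flip)
  then have "2 * (\<Sum>\<^sub>\<infinity>y. G y) = (\<Sum>\<^sub>\<infinity>y. G y + G' y)"
    using infsum_add[OF G_summable G'_summable] by simp
  then show ?thesis using pair(2) by (simp add: G_def)
qed

lemma infsum_chi2_cap_term_bind_BEC: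
  fixes K :: "bool \<Rightarrow> (bool \<times> 'w) pmf"
  assumes \<eta>: "0 \<le> \<eta>" "\<eta> \<le> 1"
  defines "R s \<equiv> K s \<bind> (\<lambda>(x, w). map_pmf (\<lambda>e. (e, w)) (BEC (1 - \<eta>) x))"
  shows "(\<Sum>\<^sub>\<infinity>e. chi2_cap_term (pmf (R True) (e, w)) (pmf (R False) (e, w)))
       = (1 - \<eta>) * chi2_cap_term (pmf (K True) (True, w) + pmf (K True) (False, w))
                                  (pmf (K False) (True, w) + pmf (K False) (False, w))
         + \<eta> * (chi2_cap_term (pmf (K True) (True, w)) (pmf (K False) (True, w))
                + chi2_cap_term (pmf (K True) (False, w)) (pmf (K False) (False, w)))"
proof -
  let ?F = "\<lambda>e. chi2_cap_term (pmf (R True) (e, w)) (pmf (R False) (e, w))"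
  have pmf_R: "pmf (R s) (e, w) = pmf (K s) (True, w) * pmf (BEC (1 - \<eta>) True) e
                                 + pmf (K s) (False, w) * pmf (BEC (1 - \<eta>) False) e" for s e
    unfolding R_def by (rule pmf_bind_pair_channel)
  have R_None: "pmf (R s) (None, w) = (1 - \<eta>) * (pmf (K s) (True, w) + pmf (K s) (False, w))" for s
    using \<eta> by (simp add: pmf_R pmf_BEC_None algebra_simps)
  have R_Some: "pmf (R s) (Some x, w) = \<eta> * pmf (K s) (x, w)" for s x
    using \<eta> by (cases x) (simp_all add: pmf_R pmf_BEC_Some)
  have "(\<Sum>\<^sub>\<infinity>e. ?F e) = ?F None + (?F (Some True) + ?F (Some False))"
    by (simp add: infsum_finite UNIV_option_conv UNIV_bool)
  then show ?thesis
    unfolding R_None R_Some using \<eta> by (simp add: chi2_cap_term_scale) (simp add: distrib_left)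
qed

text \<open>Fubini over the context w reduces this to \<open>infsum_chi2_cap_term_mix_BMS_le\<close>.\<close>

lemma chi2_cap_bind_BMS_le_BEC:
  fixes K :: "bool \<Rightarrow> (bool \<times> 'w) pmf" and M :: "bool \<Rightarrow> 'y pmf"
  assumes bms: "BMS M \<sigma>"
  shows "chi2_cap (\<lambda>s. K s \<bind> (\<lambda>(x, w). map_pmf (\<lambda>y. (y, w)) (M x)))
       \<le> chi2_cap (\<lambda>s. K s \<bind> (\<lambda>(x, w). map_pmf (\<lambda>e. (e, w)) (BEC (1 - chi2_cap M) x)))"
    (is "chi2_cap ?L \<le> chi2_cap ?R")
proof -
  define \<eta> where "\<eta> = chi2_cap M"
  have \<eta>: "0 \<le> \<eta>" "\<eta> \<le> 1" unfolding \<eta>_def by (rule chi2_cap_nonneg, rule chi2_cap_le_1)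
  define k where "k s x w = pmf (K s) (x, w)" for s x w
  have k_nonneg: "0 \<le> k s x w" for s x w by (simp add: k_def)
  let ?F = "\<lambda>w e. chi2_cap_term (pmf (?R True) (e, w)) (pmf (?R False) (e, w))"
  have pmf_L: "pmf (?L s) (y, w) = k s True w * pmf (M True) y + k s False w * pmf (M False) y" for s y w
    unfolding k_def by (rule pmf_bind_pair_channel)
  have "chi2_cap ?L = (\<Sum>\<^sub>\<infinity>w. \<Sum>\<^sub>\<infinity>y. chi2_cap_term (pmf (?L True) (y, w)) (pmf (?L False) (y, w)))"
    unfolding chi2_cap_def by (rule infsum_prod_UNIV_swap(1)[OF chi2_cap_term_summable_on])
  also have "\<dots> \<le> (\<Sum>\<^sub>\<infinity>w. \<Sum>\<^sub>\<infinity>e. ?F w e)"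
  proof (rule infsum_mono)
    show "(\<lambda>w. \<Sum>\<^sub>\<infinity>y. chi2_cap_term (pmf (?L True) (y, w)) (pmf (?L False) (y, w))) summable_on UNIV"
      by (rule infsum_prod_UNIV_swap(2)[OF chi2_cap_term_summable_on])
    show "(\<lambda>w. \<Sum>\<^sub>\<infinity>e. ?F w e) summable_on UNIV"
      by (rule infsum_prod_UNIV_swap(2)[OF chi2_cap_term_summable_on])
    fix w
    show "(\<Sum>\<^sub>\<infinity>y. chi2_cap_term (pmf (?L True) (y, w)) (pmf (?L False) (y, w))) \<le> (\<Sum>\<^sub>\<infinity>e. ?F w e)"
      unfolding pmf_L infsum_chi2_cap_term_bind_BEC[OF \<eta>, unfolded \<eta>_def] k_def[symmetric]
      by (rule infsum_chi2_cap_term_mix_BMS_le[OF bms k_nonneg k_nonneg k_nonneg k_nonneg])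
  qed
  also have "\<dots> = chi2_cap ?R"
    unfolding chi2_cap_def by (rule infsum_prod_UNIV_swap(1)[OF chi2_cap_term_summable_on, symmetric])
  finally show ?thesis .
qed

text \<open>
  \<open>J s\<close> yields the bits \<open>xs\<close> still to be sent through a channel together with the outputs \<open>zs\<close>
  observed so far; outputs of M are tagged \<open>Inl\<close>, erasure-channel outputs \<open>Inr\<close>, so that
  observations with any number of coordinates already replaced have a common type.
\<close>

definition observe ::
    "(bool \<Rightarrow> 'y pmf) \<Rightarrow> (bool \<Rightarrow> (bool list \<times> ('y + bool option) list) pmf) \<Rightarrow> bool \<Rightarrow> ('y + bool option) list pmf"
  where "observe M J s = J s \<bind> (\<lambda>(xs, zs). map_pmf (\<lambda>ys. map Inl ys @ zs) (seq_pmf (map M xs)))"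

definition observe_BEC ::
    "real \<Rightarrow> (bool \<Rightarrow> (bool list \<times> ('y + bool option) list) pmf) \<Rightarrow> bool \<Rightarrow> ('y + bool option) list pmf"
  where "observe_BEC e J s = J s \<bind> (\<lambda>(xs, zs). map_pmf (\<lambda>es. map Inr es @ zs) (seq_pmf (map (BEC e) xs)))"

lemma inj_on_map_Inr_append_Cons:
  fixes g :: "'d \<Rightarrow> 'a + 'b"
  assumes "inj g"
  shows "inj_on (\<lambda>(y, (es :: 'b list, zs :: ('a + 'b) list)). map Inr es @ g y # zs) {(y, (es, zs)). length es = n}"
proof -
  have "y = y' \<and> es = es' \<and> zs = zs'" if len: "length es = length es'"
    and eq: "map (Inr :: 'b \<Rightarrow> 'a + 'b) es @ g y # zs = map Inr es' @ g y' # zs'" for y y' es es' zs zs'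
  proof -
    have "map (Inr :: 'b \<Rightarrow> 'a + 'b) es = map Inr es' \<and> g y # zs = g y' # zs'"
      using eq len by (subst (asm) append_eq_append_conv) auto
    then show ?thesis using assms by (auto simp: inj_eq list.inj_map_strong)
  qed
  then show ?thesis unfolding inj_on_def by auto
qed

definition send_last ::
    "(bool \<Rightarrow> 'y pmf) \<Rightarrow> (bool \<Rightarrow> (bool list \<times> ('y + bool option) list) pmf) \<Rightarrow> bool \<Rightarrow> (bool list \<times> ('y + bool option) list) pmf"
  where "send_last M J s = J s \<bind> (\<lambda>(xs, zs). map_pmf (\<lambda>y. (butlast xs, Inl y # zs)) (M (last xs)))"

lemma observe_send_last:
  assumes "\<And>s p. p \<in> set_pmf (J s) \<Longrightarrow> fst p \<noteq> []"
  shows "observe M (send_last M J) = observe M J"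
  unfolding observe_def send_last_def bind_assoc_pmf
  by (intro ext bind_pmf_cong)
    (auto simp: case_prod_unfold map_seq_pmf_last_first bind_map_pmf dest: assms)

text \<open>The context K of the last pending coordinate makes this an instance of \<open>chi2_cap_bind_BMS_le_BEC\<close>.\<close>

lemma chi2_cap_observe_BEC_send_last_le:
  assumes bms: "BMS M \<sigma>" and len: "\<And>s p. p \<in> set_pmf (J s) \<Longrightarrow> length (fst p) = Suc n"
  shows "chi2_cap (observe_BEC (1 - chi2_cap M) (send_last M J)) \<le> chi2_cap (observe_BEC (1 - chi2_cap M) J)"
proof -
  define \<eta> where "\<eta> = 1 - chi2_cap M"
  define K where "K s = J s \<bind> (\<lambda>(xs, zs). map_pmf (\<lambda>es. (last xs, (es, zs)))
                                           (seq_pmf (map (BEC \<eta>) (butlast xs))))" for s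
  define f1 where "f1 = (\<lambda>(y::'a, (es::bool option list, zs::('a + bool option) list)). map Inr es @ Inl y # zs)"
  define f2 where "f2 = (\<lambda>(e::bool option, (es::bool option list, zs::('a + bool option) list)). map Inr es @ Inr e # zs)"
  let ?KM = "\<lambda>s. K s \<bind> (\<lambda>(x, w). map_pmf (\<lambda>y. (y, w)) (M x))"
  let ?KE = "\<lambda>s. K s \<bind> (\<lambda>(x, w). map_pmf (\<lambda>e. (e, w)) (BEC \<eta> x))"
  have nonempty: "fst p \<noteq> []" if "p \<in> set_pmf (J s)" for p s
    using len[OF that] by auto
  have observe_BEC_send_last: "observe_BEC \<eta> (send_last M J) s = map_pmf f1 (?KM s)" for s
    unfolding observe_BEC_def send_last_def K_def bind_assoc_pmf map_bind_pmf
    by (rule bind_pmf_cong[OF refl], clarsimp simp: bind_map_pmf map_bind_pmf pmf.map_comp o_def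
        f1_def map_pmf_def bind_assoc_pmf bind_return_pmf, rule bind_commute_pmf)
  have observe_BEC_J: "observe_BEC \<eta> J s = map_pmf f2 (?KE s)" for s
    unfolding observe_BEC_def K_def bind_assoc_pmf map_bind_pmf
    by (intro bind_pmf_cong)
      (auto simp: bind_map_pmf map_bind_pmf pmf.map_comp o_def f2_def map_pmf_def bind_assoc_pmf
        bind_return_pmf bind_seq_pmf_map_butlast dest!: nonempty)
  have supp_K: "set_pmf (K s) \<subseteq> {(x, (es, zs)). length es = n}" for s
    using len[of _ s] unfolding K_def by (auto simp: case_prod_unfold dest!: length_in_set_seq_pmf)
  have inj1: "inj_on f1 (set_pmf (?KM True) \<union> set_pmf (?KM False))"
    unfolding f1_def by (rule inj_on_subset[OF inj_on_map_Inr_append_Cons[OF inj_Inl, where n=n]])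
      (auto simp: case_prod_unfold dest: subsetD[OF supp_K])
  have inj2: "inj_on f2 (set_pmf (?KE True) \<union> set_pmf (?KE False))"
    unfolding f2_def by (rule inj_on_subset[OF inj_on_map_Inr_append_Cons[OF inj_Inr, where n=n]])
      (auto simp: case_prod_unfold dest: subsetD[OF supp_K])
  have "chi2_cap (observe_BEC \<eta> (send_last M J)) = chi2_cap ?KM"
    unfolding observe_BEC_send_last by (rule chi2_cap_map_pmf_inj_on[OF inj1])
  also have "\<dots> \<le> chi2_cap ?KE" unfolding \<eta>_def by (rule chi2_cap_bind_BMS_le_BEC[OF bms])
  also have "\<dots> = chi2_cap (observe_BEC \<eta> J)"
    unfolding observe_BEC_J by (rule chi2_cap_map_pmf_inj_on[OF inj2, symmetric])
  finally show ?thesis unfolding \<eta>_def .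
qed

lemma chi2_cap_observe_le_observe_BEC:
  assumes bms: "BMS M \<sigma>" and len: "\<And>s p. p \<in> set_pmf (J s) \<Longrightarrow> length (fst p) = n"
  shows "chi2_cap (observe M J) \<le> chi2_cap (observe_BEC (1 - chi2_cap M) J)"
  using len
proof (induction n arbitrary: J)
  case 0
  have "observe M J = observe_BEC (1 - chi2_cap M) J"
    unfolding observe_def observe_BEC_def
    by (intro ext bind_pmf_cong) (use 0 in \<open>auto simp: case_prod_unfold\<close>)
  then show ?case by simp
next
  case (Suc n)
  have "length (fst p) = n" if "p \<in> set_pmf (send_last M J s)" for s p
    using that Suc.prems[of _ s] unfolding send_last_def by (auto simp: case_prod_unfold)
  then have "chi2_cap (observe M (send_last M J)) \<le> chi2_cap (observe_BEC (1 - chi2_cap M) (send_last M J))"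
    by (rule Suc.IH)
  also have "observe M (send_last M J) = observe M J"
    by (rule observe_send_last) (use Suc.prems in fastforce)
  also note chi2_cap_observe_BEC_send_last_le[OF bms Suc.prems]
  finally show ?case .
qed

lemma inj_on_map_Inl: "inj_on (map Inl) A"
  by (rule inj_on_subset[OF list.inj_map[OF inj_Inl] subset_UNIV])

lemma inj_on_map_Inr: "inj_on (map Inr) A"
  by (rule inj_on_subset[OF list.inj_map[OF inj_Inr] subset_UNIV])

lemma chi2_cap_bind_seq_le_BEC_prod_comp:
  fixes M :: "bool \<Rightarrow> 'y pmf"
  assumes bms: "BMS M \<sigma>" and len: "\<And>s xs. xs \<in> set_pmf (B s) \<Longrightarrow> length xs = n"
  shows "chi2_cap (\<lambda>s. B s \<bind> (\<lambda>xs. seq_pmf (map M xs))) \<le> chi2_cap (BEC_prod_comp (1 - chi2_cap M) B)"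
proof -
  define J where "J s = map_pmf (\<lambda>xs. (xs, ([] :: ('y + bool option) list))) (B s)" for s
  have len_J: "\<And>s p. p \<in> set_pmf (J s) \<Longrightarrow> length (fst p) = n" using len by (auto simp: J_def)
  have "chi2_cap (\<lambda>s. B s \<bind> (\<lambda>xs. seq_pmf (map M xs)))
      = chi2_cap (\<lambda>s. map_pmf (map (Inl :: 'y \<Rightarrow> 'y + bool option)) (B s \<bind> (\<lambda>xs. seq_pmf (map M xs))))"
    by (rule chi2_cap_map_pmf_inj_on[OF inj_on_map_Inl, symmetric])
  also have "\<dots> = chi2_cap (observe M J)"
    unfolding observe_def J_def by (simp add: bind_map_pmf map_bind_pmf)
  also have "\<dots> \<le> chi2_cap (observe_BEC (1 - chi2_cap M) J)"
    by (rule chi2_cap_observe_le_observe_BEC[OF bms len_J])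
  also have "\<dots> = chi2_cap (\<lambda>s. map_pmf (map (Inr :: bool option \<Rightarrow> 'y + bool option)) (BEC_prod_comp (1 - chi2_cap M) B s))"
    unfolding observe_BEC_def J_def by (simp add: bind_map_pmf map_bind_pmf BEC_prod_comp_def)
  also have "\<dots> = chi2_cap (BEC_prod_comp (1 - chi2_cap M) B)"
    by (rule chi2_cap_map_pmf_inj_on[OF inj_on_map_Inr])
  finally show ?thesis .
qed

lemma chi2_cap_replicate_le:
  fixes H :: "bool \<Rightarrow> 'y pmf"
  assumes bms: "BMS H \<sigma>"
  shows "chi2_cap (\<lambda>s. seq_pmf (replicate t (H s))) \<le> real t * chi2_cap H"
proof -
  have "chi2_cap (\<lambda>s. seq_pmf (replicate t (H s))) = chi2_cap (\<lambda>s. return_pmf (replicate t s) \<bind> (\<lambda>xs. seq_pmf (map H xs)))"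
    by (simp add: bind_return_pmf)
  also have "\<dots> \<le> chi2_cap (BEC_prod_comp (1 - chi2_cap H) (\<lambda>s. return_pmf (replicate t s)))"
    by (rule chi2_cap_bind_seq_le_BEC_prod_comp[OF bms]) simp
  also have "\<dots> \<le> real t * chi2_cap H"
    unfolding BEC_prod_comp_def by (rule chi2_cap_bind_seq_BEC_le[OF chi2_cap_nonneg chi2_cap_le_1]) simp
  finally show ?thesis .
qed

text \<open>The tag \<open>lenf\<close> recovers the mixture index from an output, so the mixture loses nothing.\<close>

lemma chi2_cap_mixture:
  fixes D :: "'t pmf" and V :: "'t \<Rightarrow> bool \<Rightarrow> 'y pmf" and g :: "'y \<Rightarrow> 'z" and lenf :: "'y \<Rightarrow> 't"
  assumes inj: "inj g"
    and len: "\<And>t s y. y \<in> set_pmf (V t s) \<Longrightarrow> lenf y = t"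
  shows "chi2_cap (\<lambda>s. D \<bind> (\<lambda>t. map_pmf g (V t s))) = (\<Sum>\<^sub>\<infinity>t. pmf D t * chi2_cap (V t))"
    and "(\<lambda>t. pmf D t * chi2_cap (V t)) summable_on UNIV"
proof -
  define P where "P s = D \<bind> (\<lambda>t. map_pmf (\<lambda>y. (t, y)) (V t s))" for s
  have P_tagged: "lenf (snd w) = fst w" if "w \<in> set_pmf (P s)" for w s
    using that len unfolding P_def by auto
  have inj_P: "inj_on (g \<circ> snd) (set_pmf (P True) \<union> set_pmf (P False))"
  proof (rule inj_onI)
    fix u v assume "u \<in> set_pmf (P True) \<union> set_pmf (P False)" "v \<in> set_pmf (P True) \<union> set_pmf (P False)"
      and "(g \<circ> snd) u = (g \<circ> snd) v"
    then have "lenf (snd u) = fst u" "lenf (snd v) = fst v" "snd u = snd v"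
      using P_tagged inj by (blast, blast, simp add: inj_eq)
    then show "u = v" by (metis prod.collapse)
  qed
  have "chi2_cap (\<lambda>s. D \<bind> (\<lambda>t. map_pmf g (V t s))) = chi2_cap (\<lambda>s. map_pmf (g \<circ> snd) (P s))"
    unfolding P_def by (simp add: map_bind_pmf pmf.map_comp o_def)
  also have "\<dots> = chi2_cap P" by (rule chi2_cap_map_pmf_inj_on[OF inj_P])
  finally have cap_P: "chi2_cap (\<lambda>s. D \<bind> (\<lambda>t. map_pmf g (V t s))) = chi2_cap P" .
  have pmf_P: "pmf (P s) (t, y) = pmf D t * pmf (V t s) y" for s t y
  proof -
    have "pmf (P s) (t, y) = measure_pmf.expectation D (\<lambda>t'. if t' = t then pmf (V t s) y else 0)"
      unfolding P_def pmf_bind by (intro integral_cong_AE) (auto simp: pmf_map_pair_right)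
    also have "\<dots> = (\<Sum>t'\<in>{t}. (if t' = t then pmf (V t s) y else 0) * pmf D t')"
      by (rule integral_measure_pmf_real) (auto split: if_splits)
    finally show ?thesis by simp
  qed
  have inner: "(\<Sum>\<^sub>\<infinity>y. chi2_cap_term (pmf (P True) (t, y)) (pmf (P False) (t, y))) = pmf D t * chi2_cap (V t)" for t
    unfolding pmf_P chi2_cap_term_scale[OF pmf_nonneg] chi2_cap_def by (rule infsum_cmult_right')
  show "chi2_cap (\<lambda>s. D \<bind> (\<lambda>t. map_pmf g (V t s))) = (\<Sum>\<^sub>\<infinity>t. pmf D t * chi2_cap (V t))"
    unfolding cap_P chi2_cap_def infsum_prod_UNIV(1)[OF chi2_cap_term_summable_on]
    by (simp only: inner[unfolded chi2_cap_def])
  show "(\<lambda>t. pmf D t * chi2_cap (V t)) summable_on UNIV"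
    using infsum_prod_UNIV(2)[OF chi2_cap_term_summable_on, of P] unfolding inner .
qed

section \<open>The broadcast process on the hypertree\<close>

lemma bms_flip_imp_map_Not:
  assumes "bms_flip B"
  shows "B False = map_pmf (map Not) (B True)"
proof (rule pmf_eqI)
  fix ys :: "bool list"
  have inv: "map Not (map Not zs) = zs" for zs :: "bool list" by (induction zs) auto
  have inj: "inj (map Not :: bool list \<Rightarrow> bool list)" by (rule inj_on_inverseI[where g="map Not"]) (rule inv)
  have "pmf (map_pmf (map Not) (B True)) ys = pmf (B True) (map Not ys)"
    using pmf_map_inj'[OF inj, of "B True" "map Not ys"] by (simp only: inv)
  also have "\<dots> = measure_pmf.prob (B False) (map Not ` {map Not ys})"
    using assms[unfolded bms_flip_def, rule_format, of "{map Not ys}"] by (simp add: measure_pmf_single)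
  also have "map Not ` {map Not ys} = {ys}" by (simp only: image_insert image_empty inv)
  finally show "pmf (B False) ys = pmf (map_pmf (map Not) (B True)) ys" by (simp add: measure_pmf_single)
qed

lemma seq_pmf_replicate_map_pmf:
  "seq_pmf (replicate t (map_pmf f p)) = map_pmf (map f) (seq_pmf (replicate t p))"
  using seq_pmf_map_map[of f "replicate t p"] by simp

fun flip_obs :: "obs \<Rightarrow> obs" where
  "flip_obs (Leaf b) = Leaf (\<not> b)"
| "flip_obs (Inner yss) = Inner (map (map flip_obs) yss)"

lemma flip_obs_flip_obs [simp]: "flip_obs (flip_obs ob) = ob"
  by (induction ob rule: flip_obs.induct) (simp_all add: map_idI)

lemma BMS_boht_obs:
  assumes flip: "B False = map_pmf (map Not) (B True)"
  shows "BMS (boht_obs D B k) flip_obs"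
proof (induction k)
  case 0
  then show ?case by (simp add: BMS_def)
next
  case (Suc k)
  define H where "H = (\<lambda>s. B s \<bind> (\<lambda>xs. seq_pmf (map (boht_obs D B k) xs)))"
  have "BMS H (map flip_obs)" unfolding H_def by (rule BMS_bind_seq_pmf[OF Suc flip])
  then have H_False: "H False = map_pmf (map flip_obs) (H True)" by (simp add: BMS_def)
  have "boht_obs D B (Suc k) False = D \<bind> (\<lambda>t. map_pmf Inner (seq_pmf (replicate t (H False))))"
    by (simp add: H_def)
  also have "\<dots> = map_pmf flip_obs (D \<bind> (\<lambda>t. map_pmf Inner (seq_pmf (replicate t (H True)))))"
    unfolding H_False seq_pmf_replicate_map_pmf by (simp add: map_bind_pmf pmf.map_comp o_def)
  also have "\<dots> = map_pmf flip_obs (boht_obs D B (Suc k) True)" by (simp add: H_def)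
  finally show ?case unfolding BMS_def by simp
qed

text \<open>
  The subtree observation at depth k + 1 is a D-mixture of t copies of
  \<open>H = boht_obs k\<^sup>\<times>\<^sup>(\<^sup>r\<^sup>-\<^sup>1\<^sup>) \<circ> B\<close>; inside H the depth-k channel is then replaced by an erasure
  channel of the same capacity.
\<close>

lemma chi2_cap_boht_obs_Suc_le:
  assumes len: "\<And>s xs. xs \<in> set_pmf (B s) \<Longrightarrow> length xs = n"
    and flip: "B False = map_pmf (map Not) (B True)"
    and intD: "integrable (measure_pmf D) real"
  shows "chi2_cap (boht_obs D B (Suc k))
       \<le> measure_pmf.expectation D real * chi2_cap (BEC_prod_comp (1 - chi2_cap (boht_obs D B k)) B)"
proof -
  define H where "H = (\<lambda>s. B s \<bind> (\<lambda>xs. seq_pmf (map (boht_obs D B k) xs)))"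
  define V where "V t s = seq_pmf (replicate t (H s))" for t s
  have len_V: "length y = t" if "y \<in> set_pmf (V t s)" for t s y
    using length_in_set_seq_pmf[OF that[unfolded V_def]] by simp
  have inj_Inner: "inj Inner" by (simp add: inj_def)
  have BMS_H: "BMS H (map flip_obs)"
    unfolding H_def by (rule BMS_bind_seq_pmf[OF BMS_boht_obs[OF flip] flip])
  have E_summable: "(\<lambda>t. pmf D t * real t) summable_on UNIV"
    using intD integrable_measure_pmf_iff_summable_on by blast
  have E_nonneg: "0 \<le> measure_pmf.expectation D real" by (rule integral_nonneg_AE) simp
  have "boht_obs D B (Suc k) = (\<lambda>s. D \<bind> (\<lambda>t. map_pmf Inner (V t s)))"
    by (rule ext) (simp add: V_def H_def)
  then have "chi2_cap (boht_obs D B (Suc k)) = chi2_cap (\<lambda>s. D \<bind> (\<lambda>t. map_pmf Inner (V t s)))"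
    by simp
  also have "\<dots> = (\<Sum>\<^sub>\<infinity>t. pmf D t * chi2_cap (V t))"
    by (rule chi2_cap_mixture(1)[OF inj_Inner len_V])
  also have "\<dots> \<le> (\<Sum>\<^sub>\<infinity>t. pmf D t * real t * chi2_cap H)"
  proof (rule infsum_mono[OF chi2_cap_mixture(2)[OF inj_Inner len_V] summable_on_cmult_left[OF E_summable]])
    fix t
    show "pmf D t * chi2_cap (V t) \<le> pmf D t * real t * chi2_cap H"
      unfolding V_def using mult_left_mono[OF chi2_cap_replicate_le[OF BMS_H, where t=t] pmf_nonneg[of D t]]
      by (simp add: mult.assoc)
  qed
  also have "\<dots> = measure_pmf.expectation D real * chi2_cap H"
    by (simp add: infsum_cmult_left' expectation_pmf_eq_infsum[OF intD])
  also have "\<dots> \<le> measure_pmf.expectation D real * chi2_cap (BEC_prod_comp (1 - chi2_cap (boht_obs D B k)) B)"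
    unfolding H_def
    by (rule mult_left_mono[OF chi2_cap_bind_seq_le_BEC_prod_comp[OF BMS_boht_obs[OF flip] len] E_nonneg])
  finally show ?thesis .
qed

lemma f_B_nonneg: "0 < \<epsilon> \<Longrightarrow> 0 \<le> f_B r B \<epsilon>"
  unfolding f_B_def C_chi2_eq_chi2_cap by (intro divide_nonneg_nonneg chi2_cap_nonneg) auto

lemma chi2_cap_BEC_prod_comp_le:
  assumes len: "\<And>s xs. xs \<in> set_pmf (B s) \<Longrightarrow> length xs = n" and "0 \<le> \<epsilon>" "\<epsilon> \<le> 1"
  shows "chi2_cap (BEC_prod_comp (1 - \<epsilon>) B) \<le> real n * \<epsilon>"
  unfolding BEC_prod_comp_def by (rule chi2_cap_bind_seq_BEC_le[OF assms(2,3) len])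

lemma chi2_cap_BEC_prod_comp_le_SUP_f_B:
  assumes r: "r \<ge> 2" and len: "\<And>s xs. xs \<in> set_pmf (B s) \<Longrightarrow> length xs = r - 1"
    and e: "0 \<le> \<epsilon>" "\<epsilon> \<le> 1"
  shows "chi2_cap (BEC_prod_comp (1 - \<epsilon>) B) \<le> real (r - 1) * \<epsilon> * (SUP \<epsilon>\<in>{0<..1}. f_B r B \<epsilon>)"
    and "0 \<le> (SUP \<epsilon>\<in>{0<..1}. f_B r B \<epsilon>)"
proof -
  have r_pos: "real (r - 1) > 0" using r by simp
  have f_B_le_1: "f_B r B \<epsilon> \<le> 1" if "\<epsilon> \<in> {0<..1}" for \<epsilon>
    using chi2_cap_BEC_prod_comp_le[OF len, where \<epsilon>=\<epsilon>] that r_pos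
    by (simp add: f_B_def C_chi2_eq_chi2_cap divide_le_eq)
  have le_SUP: "f_B r B \<epsilon> \<le> (SUP \<epsilon>\<in>{0<..1}. f_B r B \<epsilon>)" if "\<epsilon> \<in> {0<..1}" for \<epsilon>
    using f_B_le_1 by (intro cSUP_upper[OF that] bdd_aboveI[where M=1]) auto
  show SUP_nonneg: "0 \<le> (SUP \<epsilon>\<in>{0<..1}. f_B r B \<epsilon>)"
    using f_B_nonneg[of 1 r B] le_SUP[of 1] by simp
  show "chi2_cap (BEC_prod_comp (1 - \<epsilon>) B) \<le> real (r - 1) * \<epsilon> * (SUP \<epsilon>\<in>{0<..1}. f_B r B \<epsilon>)"
  proof (cases "\<epsilon> = 0")
    case True
    then show ?thesis using chi2_cap_BEC_prod_comp_le[OF len, where \<epsilon>=0] by simp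
  next
    case False
    then have "\<epsilon> \<in> {0<..1}" using e by auto
    then have "chi2_cap (BEC_prod_comp (1 - \<epsilon>) B) = real (r - 1) * \<epsilon> * f_B r B \<epsilon>"
      using r_pos by (simp add: f_B_def C_chi2_eq_chi2_cap)
    also have "\<dots> \<le> real (r - 1) * \<epsilon> * (SUP \<epsilon>\<in>{0<..1}. f_B r B \<epsilon>)"
      using le_SUP[OF \<open>\<epsilon> \<in> {0<..1}\<close>] r_pos e by (intro mult_left_mono) auto
    finally show ?thesis .
  qed
qed

theorem mainTheorem13:
  fixes r :: nat and B :: "bool \<Rightarrow> bool list pmf" and D :: "nat pmf" and d :: real
  assumes r2: "r \<ge> 2"
    and len: "\<And>s xs. xs \<in> set_pmf (B s) \<Longrightarrow> length xs = r - 1"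
    and bms: "bms_flip B"
    and unif_marg: "\<And>i. i < r - 1 \<Longrightarrow>
        map_pmf (\<lambda>(s, xs). xs ! i) (bind_pmf (pmf_of_set UNIV) (\<lambda>s. map_pmf (\<lambda>xs. (s, xs)) (B s)))
        = pmf_of_set (UNIV :: bool set)"
    and intD: "integrable (measure_pmf D) real"
    and mean: "measure_pmf.expectation D real = d"
    and cond: "real (r - 1) * d * (SUP \<epsilon>\<in>{0<..1}. f_B r B \<epsilon>) < 1"
  shows "(\<lambda>k. mutual_info_pmf (boht_joint D B k)) \<longlonglongrightarrow> 0"
proof -
  define c where "c = real (r - 1) * d * (SUP \<epsilon>\<in>{0<..1}. f_B r B \<epsilon>)"
  define \<eta> where "\<eta> k = chi2_cap (boht_obs D B k)" for k
  have d_nonneg: "0 \<le> d" unfolding mean[symmetric] by (rule integral_nonneg_AE) simp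
  have c_nonneg: "0 \<le> c"
    unfolding c_def using d_nonneg chi2_cap_BEC_prod_comp_le_SUP_f_B(2)[OF r2 len, where \<epsilon>=0] by simp
  have "\<eta> (Suc k) \<le> c * \<eta> k" for k
  proof -
    have "\<eta> (Suc k) \<le> d * chi2_cap (BEC_prod_comp (1 - \<eta> k) B)"
      using chi2_cap_boht_obs_Suc_le[OF len bms_flip_imp_map_Not[OF bms] intD] by (simp add: \<eta>_def mean)
    also have "\<dots> \<le> d * (real (r - 1) * \<eta> k * (SUP \<epsilon>\<in>{0<..1}. f_B r B \<epsilon>))"
      by (intro mult_left_mono chi2_cap_BEC_prod_comp_le_SUP_f_B(1)[OF r2 len] d_nonneg)
        (simp_all add: \<eta>_def chi2_cap_nonneg chi2_cap_le_1)
    finally show ?thesis by (simp add: c_def algebra_simps)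
  qed
  then have geometric: "\<eta> k \<le> c ^ k" for k
    by (induction k) (auto simp: \<eta>_def chi2_cap_le_1 intro: order_trans mult_left_mono[OF _ c_nonneg])
  have MI_bounds: "0 \<le> mutual_info_pmf (boht_joint D B k) \<and> mutual_info_pmf (boht_joint D B k) \<le> c ^ k" for k
    using mutual_info_uniform_input_joint_bounds[of "boht_obs D B k"] geometric[of k]
    by (simp add: \<eta>_def boht_joint_def uniform_input_joint_def)
  have lim: "(\<lambda>k. c ^ k) \<longlonglongrightarrow> 0" using c_nonneg cond by (intro LIMSEQ_power_zero) (simp add: c_def)
  show ?thesis by (rule tendsto_sandwich[OF _ _ tendsto_const lim]) (use MI_bounds in auto)
qed

end
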